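(* Let $\Omega\subset\mathbb R^N$ be an open bounded set with $C^{1,1}$ boundary and let $\beta>0$. Then the quantity \[ \lambda_m=\inf_{(v,h)\in H^1(\Omega)\times\mathcal H_m(\partial\Omega),\ v\not\equiv0}\frac{\int_\Omega|\nabla v|^2dx+\beta\int_{\partial\Omega}\frac{v^2}{1+\beta h}\,d\mathcal H^{N-1}}{\int_\Omega v^2dx} \] is a decreasing function of $m>0$.
   Context: For $m\ge 0$, $\mathcal H_m(\partial\Omega)=\{h\in L^1(\partial\Omega): h\ge 0,\ \int_{\partial\Omega}h\,d\mathcal H^{N-1}=m\}$. Boundary values of $v$ are traces. *)

theory Defs
  imports "HOL-Analysis.Analysis"
begin

definition hausdorff_pre :: "nat \<Rightarrow> real \<Rightarrow> 'a::metric_space set \<Rightarrow> ennreal" where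
  "hausdorff_pre s \<delta> A =
     (INF C \<in> {C :: nat \<Rightarrow> 'a set. A \<subseteq> (\<Union>i. C i) \<and> (\<forall>i. bounded (C i) \<and> diameter (C i) \<le> \<delta>)}.
        (\<Sum>i. ennreal (if C i = {} then 0 else unit_ball_vol (real s) * (diameter (C i) / 2) ^ s)))"

definition hausdorff_outer :: "nat \<Rightarrow> 'a::metric_space set \<Rightarrow> ennreal" where
  "hausdorff_outer s A = (SUP \<delta> \<in> {0<..}. hausdorff_pre s \<delta> A)"

definition hausdorff_measure :: "nat \<Rightarrow> 'a::metric_space measure" where
  "hausdorff_measure s = measure_of UNIV (sets borel) (hausdorff_outer s)"

definition surface_measure :: "'a::euclidean_space set \<Rightarrow> 'a measure" where
  "surface_measure \<Omega> = restrict_space (hausdorff_measure (DIM('a) - 1)) (frontier \<Omega>)"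

text \<open>C^{1,1} boundary: near every boundary point, Omega is locally the subgraph
  of a C^1 function with Lipschitz gradient, over the hyperplane orthogonal to a unit
  vector e (the function is evaluated on the orthogonal projection onto that hyperplane).\<close>
definition C11_boundary :: "'a::euclidean_space set \<Rightarrow> bool" where
  "C11_boundary \<Omega> \<longleftrightarrow>
     (\<forall>x\<in>frontier \<Omega>. \<exists>r>0. \<exists>e::'a. \<exists>\<phi>::'a \<Rightarrow> real. \<exists>D\<phi>::'a \<Rightarrow> 'a. \<exists>L.
        norm e = 1 \<and>
        (\<forall>y. (\<phi> has_derivative (\<lambda>k. D\<phi> y \<bullet> k)) (at y)) \<and>
        (\<forall>y z. norm (D\<phi> y - D\<phi> z) \<le> L * norm (y - z)) \<and>
        \<Omega> \<inter> ball x r = {y \<in> ball x r. y \<bullet> e < \<phi> (y - (y \<bullet> e) *\<^sub>R e)})"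

definition weak_gradient :: "'a::euclidean_space set \<Rightarrow> ('a \<Rightarrow> real) \<Rightarrow> ('a \<Rightarrow> 'a) \<Rightarrow> bool" where
  "weak_gradient \<Omega> v G \<longleftrightarrow>
     (\<forall>\<phi> :: 'a \<Rightarrow> real. \<forall>D\<phi> :: 'a \<Rightarrow> 'a. \<forall>K.
        (\<forall>y. (\<phi> has_derivative (\<lambda>k. D\<phi> y \<bullet> k)) (at y)) \<and> continuous_on UNIV D\<phi> \<and>
        compact K \<and> K \<subseteq> \<Omega> \<and> (\<forall>y. y \<notin> K \<longrightarrow> \<phi> y = 0)
        \<longrightarrow> (\<forall>i\<in>Basis. (LINT y:\<Omega>|lebesgue. v y * (D\<phi> y \<bullet> i)) = - (LINT y:\<Omega>|lebesgue. (G y \<bullet> i) * \<phi> y)))"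

definition H1_with_gradient :: "'a::euclidean_space set \<Rightarrow> ('a \<Rightarrow> real) \<Rightarrow> ('a \<Rightarrow> 'a) \<Rightarrow> bool" where
  "H1_with_gradient \<Omega> v G \<longleftrightarrow>
     set_borel_measurable lebesgue \<Omega> v \<and> set_integrable lebesgue \<Omega> (\<lambda>y. (v y)\<^sup>2) \<and>
     set_borel_measurable lebesgue \<Omega> G \<and> set_integrable lebesgue \<Omega> (\<lambda>y. (norm (G y))\<^sup>2) \<and>
     weak_gradient \<Omega> v G"

definition is_trace :: "'a::euclidean_space set \<Rightarrow> ('a \<Rightarrow> real) \<Rightarrow> ('a \<Rightarrow> 'a) \<Rightarrow> ('a \<Rightarrow> real) \<Rightarrow> bool" where
  "is_trace \<Omega> v G g \<longleftrightarrow>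
     g \<in> borel_measurable (surface_measure \<Omega>) \<and>
     integrable (surface_measure \<Omega>) (\<lambda>y. (g y)\<^sup>2) \<and>
     (\<exists>u :: nat \<Rightarrow> 'a \<Rightarrow> real. \<exists>Du :: nat \<Rightarrow> 'a \<Rightarrow> 'a.
        (\<forall>n y. (u n has_derivative (\<lambda>k. Du n y \<bullet> k)) (at y)) \<and> (\<forall>n. continuous_on UNIV (Du n)) \<and>
        (\<lambda>n. \<integral>\<^sup>+ y\<in>\<Omega>. ennreal ((u n y - v y)\<^sup>2) \<partial>lebesgue) \<longlonglongrightarrow> 0 \<and>
        (\<lambda>n. \<integral>\<^sup>+ y\<in>\<Omega>. ennreal ((norm (Du n y - G y))\<^sup>2) \<partial>lebesgue) \<longlonglongrightarrow> 0 \<and>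
        (\<lambda>n. \<integral>\<^sup>+ y. ennreal ((u n y - g y)\<^sup>2) \<partial>surface_measure \<Omega>) \<longlonglongrightarrow> 0)"

definition Hm :: "'a::euclidean_space set \<Rightarrow> real \<Rightarrow> ('a \<Rightarrow> real) set" where
  "Hm \<Omega> m = {h. integrable (surface_measure \<Omega>) h \<and> (\<forall>y\<in>frontier \<Omega>. h y \<ge> 0) \<and>
                  (\<integral>y. h y \<partial>surface_measure \<Omega>) = m}"

definition lambda_m :: "'a::euclidean_space set \<Rightarrow> real \<Rightarrow> real \<Rightarrow> real" where
  "lambda_m \<Omega> \<beta> m = Inf {Q. \<exists>v G g h.
       H1_with_gradient \<Omega> v G \<and> is_trace \<Omega> v G g \<and> h \<in> Hm \<Omega> m \<and>
       (LINT y:\<Omega>|lebesgue. (v y)\<^sup>2) > 0 \<and>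
       Q = ((LINT y:\<Omega>|lebesgue. (norm (G y))\<^sup>2)
             + \<beta> * (\<integral>y. (g y)\<^sup>2 / (1 + \<beta> * h y) \<partial>surface_measure \<Omega>))
           / (LINT y:\<Omega>|lebesgue. (v y)\<^sup>2)}"

end

theory Submission
  imports Defs
begin

text \<open>Multiplying a boundary weight by \<open>m\<^sub>2 / m\<^sub>1 \<ge> 1\<close> maps \<open>\<H>\<^sub>m\<^sub>1\<close> into \<open>\<H>\<^sub>m\<^sub>2\<close> and can
  only decrease the boundary term \<open>\<integral> v\<^sup>2 / (1 + \<beta> h)\<close>, so every Rayleigh quotient admissible
  for \<open>m\<^sub>1\<close> is dominated by one admissible for \<open>m\<^sub>2\<close>; scaling by \<open>m\<^sub>1 / m\<^sub>2\<close> shows that the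
  two families are empty simultaneously. No regularity of \<open>\<Omega>\<close> is needed.\<close>

definition rayleigh_quotient ::
    "'a::euclidean_space set \<Rightarrow> real \<Rightarrow> ('a \<Rightarrow> real) \<Rightarrow> ('a \<Rightarrow> 'a) \<Rightarrow> ('a \<Rightarrow> real) \<Rightarrow> ('a \<Rightarrow> real) \<Rightarrow> real"
  where
  "rayleigh_quotient \<Omega> \<beta> v G g h =
     ((LINT y:\<Omega>|lebesgue. (norm (G y))\<^sup>2)
       + \<beta> * (\<integral>y. (g y)\<^sup>2 / (1 + \<beta> * h y) \<partial>surface_measure \<Omega>))
     / (LINT y:\<Omega>|lebesgue. (v y)\<^sup>2)"

definition rayleigh_quotients :: "'a::euclidean_space set \<Rightarrow> real \<Rightarrow> real \<Rightarrow> real set" where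
  "rayleigh_quotients \<Omega> \<beta> m = {Q. \<exists>v G g h.
     H1_with_gradient \<Omega> v G \<and> is_trace \<Omega> v G g \<and> h \<in> Hm \<Omega> m \<and>
     (LINT y:\<Omega>|lebesgue. (v y)\<^sup>2) > 0 \<and> Q = rayleigh_quotient \<Omega> \<beta> v G g h}"

lemma lambda_m_eq_Inf_rayleigh_quotients:
  "lambda_m \<Omega> \<beta> m = Inf (rayleigh_quotients \<Omega> \<beta> m)"
  by (simp add: lambda_m_def rayleigh_quotients_def rayleigh_quotient_def)

lemma space_surface_measure: "space (surface_measure \<Omega>) = frontier \<Omega>"
  by (simp add: surface_measure_def hausdorff_measure_def space_restrict_space space_measure_of_conv)

lemma Hm_scale:
  assumes "c > 0" and "h \<in> Hm \<Omega> m"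
  shows "(\<lambda>y. c * h y) \<in> Hm \<Omega> (c * m)"
  using assms by (auto simp: Hm_def)

lemma integrable_divide_one_plus_nonneg:
  fixes f h :: "'a \<Rightarrow> real"
  assumes f: "integrable M f" and h: "h \<in> borel_measurable M"
    and h_nonneg: "\<And>y. y \<in> space M \<Longrightarrow> 0 \<le> h y" and "0 \<le> \<beta>"
  shows "integrable M (\<lambda>y. f y / (1 + \<beta> * h y))"
proof (rule Bochner_Integration.integrable_bound[OF f])
  show "(\<lambda>y. f y / (1 + \<beta> * h y)) \<in> borel_measurable M"
    using borel_measurable_integrable[OF f] h by measurable
  show "AE y in M. norm (f y / (1 + \<beta> * h y)) \<le> norm (f y)"
  proof (rule AE_I2)
    fix y assume "y \<in> space M"
    then have "1 \<le> 1 + \<beta> * h y"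
      using h_nonneg \<open>0 \<le> \<beta>\<close> by simp
    then show "norm (f y / (1 + \<beta> * h y)) \<le> norm (f y)"
      using divide_left_mono[of 1 "1 + \<beta> * h y" "\<bar>f y\<bar>"] by (simp add: abs_divide)
  qed
qed

lemma integral_divide_one_plus_antimono:
  fixes f h h' :: "'a \<Rightarrow> real"
  assumes f: "integrable M f" and f_nonneg: "\<And>y. y \<in> space M \<Longrightarrow> 0 \<le> f y"
    and h: "h \<in> borel_measurable M" and h_nonneg: "\<And>y. y \<in> space M \<Longrightarrow> 0 \<le> h y"
    and h_le: "\<And>y. y \<in> space M \<Longrightarrow> h y \<le> h' y" and "0 \<le> \<beta>"
  shows "(\<integral>y. f y / (1 + \<beta> * h' y) \<partial>M) \<le> (\<integral>y. f y / (1 + \<beta> * h y) \<partial>M)"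
proof (rule integral_mono')
  show "integrable M (\<lambda>y. f y / (1 + \<beta> * h y))"
    using integrable_divide_one_plus_nonneg[OF f h h_nonneg \<open>0 \<le> \<beta>\<close>] .
next
  fix y assume y: "y \<in> space M"
  then have "0 < 1 + \<beta> * h y" and "\<beta> * h y \<le> \<beta> * h' y"
    using h_nonneg h_le \<open>0 \<le> \<beta>\<close> by (auto intro: add_pos_nonneg mult_left_mono)
  then show "f y / (1 + \<beta> * h' y) \<le> f y / (1 + \<beta> * h y)"
    and "0 \<le> f y / (1 + \<beta> * h y)"
    using f_nonneg[OF y] by (auto intro: divide_left_mono)
qed

lemma rayleigh_quotient_nonneg:
  assumes "0 \<le> \<beta>" and "h \<in> Hm \<Omega> m"
  shows "0 \<le> rayleigh_quotient \<Omega> \<beta> v G g h"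
proof -
  have "0 \<le> (\<integral>y. (g y)\<^sup>2 / (1 + \<beta> * h y) \<partial>surface_measure \<Omega>)"
    using assms by (intro Bochner_Integration.integral_nonneg) (auto simp: Hm_def space_surface_measure)
  then show ?thesis
    using \<open>0 \<le> \<beta>\<close> unfolding rayleigh_quotient_def set_lebesgue_integral_def
    by (simp add: indicator_def)
qed

lemma rayleigh_quotient_scale_weight_le:
  assumes "0 \<le> \<beta>" and "1 \<le> c" and trace: "is_trace \<Omega> v G g" and h: "h \<in> Hm \<Omega> m"
  shows "rayleigh_quotient \<Omega> \<beta> v G g (\<lambda>y. c * h y) \<le> rayleigh_quotient \<Omega> \<beta> v G g h"
proof -
  have h_nonneg: "\<And>y. y \<in> frontier \<Omega> \<Longrightarrow> 0 \<le> h y"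
    using h by (auto simp: Hm_def)
  have "(\<integral>y. (g y)\<^sup>2 / (1 + \<beta> * (c * h y)) \<partial>surface_measure \<Omega>)
      \<le> (\<integral>y. (g y)\<^sup>2 / (1 + \<beta> * h y) \<partial>surface_measure \<Omega>)"
  proof (rule integral_divide_one_plus_antimono)
    show "integrable (surface_measure \<Omega>) (\<lambda>y. (g y)\<^sup>2)"
      using trace by (simp add: is_trace_def)
    show "h \<in> borel_measurable (surface_measure \<Omega>)"
      using h by (simp add: Hm_def borel_measurable_integrable)
    show "\<And>y. y \<in> space (surface_measure \<Omega>) \<Longrightarrow> h y \<le> c * h y"
      using mult_right_mono[OF \<open>1 \<le> c\<close> h_nonneg] by (simp add: space_surface_measure)
  qed (use h_nonneg \<open>0 \<le> \<beta>\<close> in \<open>auto simp: space_surface_measure\<close>)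
  then show ?thesis
    using \<open>0 \<le> \<beta>\<close> unfolding rayleigh_quotient_def set_lebesgue_integral_def
    by (intro divide_right_mono add_left_mono mult_left_mono) (simp_all add: indicator_def)
qed

lemma rayleigh_quotients_scale_mass:
  assumes "0 \<le> \<beta>" and "0 < c" and "Q \<in> rayleigh_quotients \<Omega> \<beta> m"
  shows "\<exists>Q' \<in> rayleigh_quotients \<Omega> \<beta> (c * m). 1 \<le> c \<longrightarrow> Q' \<le> Q"
proof -
  obtain v G g h where H1: "H1_with_gradient \<Omega> v G" and trace: "is_trace \<Omega> v G g"
    and h: "h \<in> Hm \<Omega> m" and pos: "(LINT y:\<Omega>|lebesgue. (v y)\<^sup>2) > 0"
    and Q: "Q = rayleigh_quotient \<Omega> \<beta> v G g h"
    using assms(3) by (auto simp: rayleigh_quotients_def)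
  have "rayleigh_quotient \<Omega> \<beta> v G g (\<lambda>y. c * h y) \<in> rayleigh_quotients \<Omega> \<beta> (c * m)"
    using H1 trace Hm_scale[OF \<open>0 < c\<close> h] pos by (auto simp: rayleigh_quotients_def)
  moreover have "1 \<le> c \<longrightarrow> rayleigh_quotient \<Omega> \<beta> v G g (\<lambda>y. c * h y) \<le> Q"
    using rayleigh_quotient_scale_weight_le[OF \<open>0 \<le> \<beta>\<close> _ trace h] Q by blast
  ultimately show ?thesis by blast
qed

lemma cInf_le_cInf_dominated:
  fixes A B :: "'a::conditionally_complete_lattice set"
  assumes "bdd_below B" and "\<And>a. a \<in> A \<Longrightarrow> \<exists>b\<in>B. b \<le> a" and "A = {} \<Longrightarrow> B = {}"
  shows "Inf B \<le> Inf A"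
  using assms cInf_mono[of A B] by (cases "A = {}") auto

theorem proposition3p8:
  fixes \<Omega> :: "'a::euclidean_space set" and \<beta> :: real
  assumes "open \<Omega>" and "bounded \<Omega>" and "C11_boundary \<Omega>" and "\<beta> > 0"
  shows "\<forall>m1 m2. 0 < m1 \<and> m1 \<le> m2 \<longrightarrow> lambda_m \<Omega> \<beta> m2 \<le> lambda_m \<Omega> \<beta> m1"
proof (intro allI impI)
  fix m1 m2 :: real assume m: "0 < m1 \<and> m1 \<le> m2"
  have "0 \<le> \<beta>" using \<open>\<beta> > 0\<close> by simp
  have "bdd_below (rayleigh_quotients \<Omega> \<beta> m2)"
    unfolding bdd_below_def rayleigh_quotients_def
    using rayleigh_quotient_nonneg[OF \<open>0 \<le> \<beta>\<close>] by blast
  moreover have "\<exists>Q'\<in>rayleigh_quotients \<Omega> \<beta> m2. Q' \<le> Q"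
    if "Q \<in> rayleigh_quotients \<Omega> \<beta> m1" for Q
    using rayleigh_quotients_scale_mass[OF \<open>0 \<le> \<beta>\<close> _ that, of "m2 / m1"] m by auto
  moreover have "rayleigh_quotients \<Omega> \<beta> m2 = {}" if "rayleigh_quotients \<Omega> \<beta> m1 = {}"
    using rayleigh_quotients_scale_mass[OF \<open>0 \<le> \<beta>\<close>, where c = "m1 / m2" and m = m2] m that by auto
  ultimately show "lambda_m \<Omega> \<beta> m2 \<le> lambda_m \<Omega> \<beta> m1"
    unfolding lambda_m_eq_Inf_rayleigh_quotients by (rule cInf_le_cInf_dominated)
qed

end
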